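(* Let $(R,\mathfrak{m})$ be a commutative Artinian local ring with identity, $\mathfrak{m}\neq0$ and $\mathfrak{m}^2=0$. Let $k\ge2$ and let $f_1,\dots,f_k\in R[x]$ be GE polynomials with $\deg f_i=d_i$ and $d_1\ge d_2\ge\dots\ge d_k$. Then there is a GE polynomial $h$ of degree $d_1$ such that $f_1f_2\cdots f_k=h\,x^{d_2+d_3+\dots+d_k}$. If moreover $f_1$ is irreducible and $d_1>d_2$, then $h$ is irreducible and $\operatorname{ord}(f_1f_2\cdots f_k)=d_2+\dots+d_k$.
   Context: A generalized Eisenstein (GE) polynomial is a nonconstant monic polynomial $x^d+f_{d-1}x^{d-1}+\dots+f_0\in R[x]$ with $f_i\in\mathfrak{m}$ for all $i<d$. A nonunit polynomial is irreducible if in any factorization into two polynomials one factor is a unit of $R[x]$. The order $\operatorname{ord}(f)$ of a nonzero polynomial $f=\sum a_ix^i$ is the least $i$ with $a_i\neq0$. *)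

theory Defs
  imports "HOL-Computational_Algebra.Polynomial" "HOL-Computational_Algebra.Factorial_Ring"
begin

definition is_ideal :: "'a::comm_ring_1 set \<Rightarrow> bool" where
  "is_ideal I \<longleftrightarrow> 0 \<in> I \<and> (\<forall>x\<in>I. \<forall>y\<in>I. x + y \<in> I) \<and> (\<forall>r. \<forall>x\<in>I. r * x \<in> I)"

definition maximal_ideal :: "'a::comm_ring_1 set \<Rightarrow> bool" where
  "maximal_ideal I \<longleftrightarrow> is_ideal I \<and> I \<noteq> UNIV \<and>
     (\<forall>J. is_ideal J \<and> I \<subseteq> J \<longrightarrow> J = I \<or> J = UNIV)"

definition artinian_ring :: "'a::comm_ring_1 itself \<Rightarrow> bool" where
  "artinian_ring _ \<longleftrightarrow>
     (\<forall>I :: nat \<Rightarrow> 'a set. (\<forall>n. is_ideal (I n)) \<and> (\<forall>n. I (Suc n) \<subseteq> I n)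
        \<longrightarrow> (\<exists>N. \<forall>n\<ge>N. I n = I N))"

definition GE_poly :: "'a::comm_ring_1 set \<Rightarrow> 'a poly \<Rightarrow> bool" where
  "GE_poly m f \<longleftrightarrow> degree f \<ge> 1 \<and> lead_coeff f = 1 \<and> (\<forall>i<degree f. coeff f i \<in> m)"

definition poly_ord :: "'a::zero poly \<Rightarrow> nat" where
  "poly_ord f = (LEAST i. coeff f i \<noteq> 0)"

end

theory Submission
  imports Defs
begin

text \<open>
  Write each \<open>f i\<close> as \<open>x^d i + g i\<close> with all coefficients of \<open>g i\<close> in \<open>m\<close>. As \<open>m\<^sup>2 = 0\<close>,
  any product of two of the \<open>g i\<close> vanishes, so expanding the product leaves
  \<open>x^D + \<Sum>i. x^(D - d i) * g i\<close> with \<open>D = \<Sum>i. d i\<close>; this is \<open>h * x^e\<close> with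
  \<open>h = x^d 1 + \<Sum>i. x^(d 1 - d i) * g i\<close>. For a factorisation \<open>a * b\<close> of a GE polynomial,
  the lowest and the highest coefficient of \<open>a\<close> outside \<open>m\<close> add up with those of \<open>b\<close> to the
  same degree, so \<open>a\<close> has exactly one coefficient outside \<open>m\<close>. If the constant coefficient
  \<open>a 0 * b 0\<close> is nonzero, one of \<open>a 0\<close>, \<open>b 0\<close> lies outside \<open>m\<close>, and that factor is then a unit
  plus a polynomial over \<open>m\<close>, hence a unit. When \<open>d 1 > d i\<close> for \<open>i \<ge> 2\<close>, \<open>h\<close> has the
  constant coefficient of \<open>f 1\<close>, which is nonzero because an irreducible \<open>f 1\<close> of degree
  at least 2 is not divisible by \<open>x\<close>.
\<close>

definition coeffs_in :: "'a::zero set \<Rightarrow> 'a poly \<Rightarrow> bool" where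
  "coeffs_in I p \<longleftrightarrow> (\<forall>i. coeff p i \<in> I)"

definition GE_cofactor :: "('b \<Rightarrow> 'a::comm_ring_1 poly) \<Rightarrow> 'b set \<Rightarrow> nat \<Rightarrow> 'a poly" where
  "GE_cofactor f A d =
     monom 1 d + (\<Sum>i\<in>A. monom 1 (d - degree (f i)) * (f i - monom 1 (degree (f i))))"

lemma coeff_0_GE_cofactor:
  assumes "finite A" "j \<in> A" "degree (f j) > 0"
    and "\<forall>i\<in>A - {j}. degree (f i) < degree (f j)"
  shows "coeff (GE_cofactor f A (degree (f j))) 0 = coeff (f j) 0"
proof -
  have "coeff (GE_cofactor f A (degree (f j))) 0 =
      (\<Sum>i\<in>A. coeff (monom 1 (degree (f j) - degree (f i)) * (f i - monom 1 (degree (f i)))) 0)"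
    using assms(3) by (simp add: GE_cofactor_def coeff_sum)
  also have "\<dots> = coeff (f j - monom 1 (degree (f j))) 0"
    using assms by (subst sum.remove[of A j]) (auto simp: coeff_monom_mult intro!: sum.neutral)
  finally show ?thesis
    using assms(3) by simp
qed

lemma poly_ord_mult_monom:
  fixes p :: "'a::comm_semiring_1 poly"
  assumes "coeff p 0 \<noteq> 0"
  shows "poly_ord (p * monom 1 n) = n"
  unfolding poly_ord_def
proof (rule Least_equality)
  show "coeff (p * monom 1 n) n \<noteq> 0"
    using assms by (simp add: mult.commute[of p] coeff_monom_mult)
  show "n \<le> i" if "coeff (p * monom 1 n) i \<noteq> 0" for i
    using that by (simp add: mult.commute[of p] coeff_monom_mult split: if_splits)
qed

locale square_zero_local_ring =
  fixes m :: "'a::comm_ring_1 set"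
  assumes maximal: "maximal_ideal m"
    and square_zero: "\<And>a b. a \<in> m \<Longrightarrow> b \<in> m \<Longrightarrow> a * b = 0"
begin

lemma ideal: "is_ideal m"
  using maximal by (simp add: maximal_ideal_def)

lemma zero_mem: "0 \<in> m"
  using ideal by (simp add: is_ideal_def)

lemma add_mem: "x \<in> m \<Longrightarrow> y \<in> m \<Longrightarrow> x + y \<in> m"
  using ideal by (simp add: is_ideal_def)

lemma mult_mem_left: "x \<in> m \<Longrightarrow> r * x \<in> m"
  using ideal by (simp add: is_ideal_def)

lemma mult_mem_right: "x \<in> m \<Longrightarrow> x * r \<in> m"
  using mult_mem_left[of x r] by (simp add: mult.commute)

lemma uminus_mem: "x \<in> m \<Longrightarrow> - x \<in> m"
  using mult_mem_left[of x "-1"] by simp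

lemma sum_mem: "(\<And>i. i \<in> A \<Longrightarrow> g i \<in> m) \<Longrightarrow> sum g A \<in> m"
  by (induction A rule: infinite_finite_induct) (auto simp: zero_mem add_mem)

lemma add_not_mem: "x \<notin> m \<Longrightarrow> y \<in> m \<Longrightarrow> x + y \<notin> m"
  using add_mem[of "x + y" "- y"] uminus_mem[of y] by auto

lemma one_not_mem: "1 \<notin> m"
  using maximal mult_mem_left[of 1] by (auto simp: maximal_ideal_def)

lemma zero_neq_one: "(0::'a) \<noteq> 1"
  using zero_mem one_not_mem by auto

lemma unit_if_not_mem:
  assumes "x \<notin> m"
  obtains y where "x * y = 1"
proof -
  define J where "J = {u + r * x | u r. u \<in> m}"
  have "is_ideal J"
    unfolding is_ideal_def
  proof (intro conjI ballI allI)
    show "0 \<in> J"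
      unfolding J_def by (intro CollectI exI[of _ 0] exI[of _ 0]) (simp add: zero_mem)
  next
    fix a b assume "a \<in> J" "b \<in> J"
    then obtain u r v s where "a = u + r * x" "b = v + s * x" "u \<in> m" "v \<in> m"
      by (auto simp: J_def)
    then show "a + b \<in> J"
      unfolding J_def by (intro CollectI exI[of _ "u + v"] exI[of _ "r + s"])
        (auto simp: algebra_simps add_mem)
  next
    fix c a assume "a \<in> J"
    then obtain u r where "a = u + r * x" "u \<in> m"
      by (auto simp: J_def)
    then show "c * a \<in> J"
      unfolding J_def by (intro CollectI exI[of _ "c * u"] exI[of _ "c * r"])
        (auto simp: algebra_simps mult_mem_left)
  qed
  moreover have "m \<subseteq> J"
    unfolding J_def by (force intro: exI[of _ 0])
  moreover have "x \<in> J"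
    unfolding J_def by (intro CollectI exI[of _ 0] exI[of _ 1]) (simp add: zero_mem)
  ultimately have "1 \<in> J"
    using maximal assms unfolding maximal_ideal_def by blast
  then obtain u r where "1 = u + r * x" "u \<in> m"
    by (auto simp: J_def)
  then have "r * x = 1 - u"
    by (metis add_diff_cancel_left')
  then have "x * (r * (1 + u)) = (1 - u) * (1 + u)"
    by (metis mult.assoc mult.commute)
  also have "\<dots> = 1"
    using square_zero[OF \<open>u \<in> m\<close> \<open>u \<in> m\<close>] by (simp add: algebra_simps)
  finally show thesis
    by (rule that)
qed

lemma mult_not_mem:
  assumes "x \<notin> m" "y \<notin> m"
  shows "x * y \<notin> m"
proof
  assume "x * y \<in> m"
  obtain x' y' where "x * x' = 1" "y * y' = 1"
    using assms unit_if_not_mem by metis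
  then have "(x * y) * (x' * y') = 1"
    by (metis mult.assoc mult.commute mult_1_right)
  then show False
    using \<open>x * y \<in> m\<close> mult_mem_right one_not_mem by metis
qed

lemma coeffs_in_mult_left: "coeffs_in m p \<Longrightarrow> coeffs_in m (p * q)"
  unfolding coeffs_in_def coeff_mult by (auto intro!: sum_mem mult_mem_right)

lemma coeffs_in_mult_right: "coeffs_in m q \<Longrightarrow> coeffs_in m (p * q)"
  using coeffs_in_mult_left[of q p] by (simp add: mult.commute)

lemma coeffs_in_sum: "(\<And>i. i \<in> A \<Longrightarrow> coeffs_in m (g i)) \<Longrightarrow> coeffs_in m (sum g A)"
  unfolding coeffs_in_def by (auto simp: coeff_sum intro!: sum_mem)

lemma coeffs_in_mult_eq_0: "coeffs_in m p \<Longrightarrow> coeffs_in m q \<Longrightarrow> p * q = 0"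
  unfolding coeffs_in_def by (auto simp: coeff_mult square_zero intro!: poly_eqI sum.neutral)

lemma prod_monom_add_coeffs_in:
  assumes "finite A" "\<forall>i\<in>A. coeffs_in m (g i)"
  shows "(\<Prod>i\<in>A. monom 1 (d i) + g i) =
    monom 1 (\<Sum>i\<in>A. d i) + (\<Sum>i\<in>A. monom 1 ((\<Sum>j\<in>A. d j) - d i) * g i)"
  using assms
proof (induction A rule: finite_induct)
  case empty
  then show ?case by simp
next
  case (insert a A)
  define D where "D = (\<Sum>i\<in>A. d i)"
  define S where "S = (\<Sum>i\<in>A. monom 1 (D - d i) * g i)"
  have "g a * S = 0"
    using insert.prems unfolding S_def
    by (intro coeffs_in_mult_eq_0 coeffs_in_sum coeffs_in_mult_right) auto
  moreover have "monom 1 (d a) * S = (\<Sum>i\<in>A. monom 1 (d a + D - d i) * g i)"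
  proof -
    have "d i \<le> D" if "i \<in> A" for i
      using insert.hyps that unfolding D_def by (intro member_le_sum) auto
    then show ?thesis
      unfolding S_def sum_distrib_left
      by (intro sum.cong) (simp_all add: mult.assoc[symmetric] mult_monom)
  qed
  moreover have "(\<Prod>i\<in>insert a A. monom 1 (d i) + g i) = (monom 1 (d a) + g a) * (monom 1 D + S)"
    using insert by (simp add: D_def S_def)
  ultimately show ?case
    using insert.hyps
    by (simp add: D_def[symmetric] distrib_left distrib_right mult_monom mult.commute[of "g a"]
        add_ac)
qed

lemma coeff_mult_not_mem:
  assumes "coeff p i \<notin> m" "coeff q j \<notin> m"
    and "\<And>i'. i' \<le> i + j \<Longrightarrow> i' \<noteq> i \<Longrightarrow> coeff p i' \<in> m \<or> coeff q (i + j - i') \<in> m"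
  shows "coeff (p * q) (i + j) \<notin> m"
proof -
  let ?t = "\<lambda>i'. coeff p i' * coeff q (i + j - i')"
  have "coeff (p * q) (i + j) = ?t i + (\<Sum>i'\<in>{..i + j} - {i}. ?t i')"
    unfolding coeff_mult by (subst sum.remove[of _ i]) auto
  moreover have "(\<Sum>i'\<in>{..i + j} - {i}. ?t i') \<in> m"
    using assms(3) by (intro sum_mem) (auto intro: mult_mem_left mult_mem_right)
  moreover have "?t i \<notin> m"
    using assms(1,2) by (simp add: mult_not_mem)
  ultimately show ?thesis
    by (simp add: add_not_mem)
qed

lemma coeff_mult_lowest_not_mem:
  assumes "coeff p i \<notin> m" "\<forall>i'<i. coeff p i' \<in> m" "coeff q j \<notin> m" "\<forall>j'<j. coeff q j' \<in> m"
  shows "coeff (p * q) (i + j) \<notin> m"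
proof (rule coeff_mult_not_mem[OF assms(1,3)])
  fix i' assume "i' \<le> i + j" "i' \<noteq> i"
  then have "i' < i \<or> i + j - i' < j"
    by linarith
  then show "coeff p i' \<in> m \<or> coeff q (i + j - i') \<in> m"
    using assms by blast
qed

lemma coeff_mult_highest_not_mem:
  assumes "coeff p i \<notin> m" "\<forall>i'>i. coeff p i' \<in> m" "coeff q j \<notin> m" "\<forall>j'>j. coeff q j' \<in> m"
  shows "coeff (p * q) (i + j) \<notin> m"
proof (rule coeff_mult_not_mem[OF assms(1,3)])
  fix i' assume "i' \<le> i + j" "i' \<noteq> i"
  then have "i' > i \<or> i + j - i' > j"
    by linarith
  then show "coeff p i' \<in> m \<or> coeff q (i + j - i') \<in> m"
    using assms by blast
qed

lemma obtain_lowest_coeff_not_mem: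
  assumes "\<not> coeffs_in m p"
  obtains i where "coeff p i \<notin> m" "\<forall>i'<i. coeff p i' \<in> m"
  using assms exists_least_iff[of "\<lambda>i. coeff p i \<notin> m"] unfolding coeffs_in_def by blast

lemma obtain_highest_coeff_not_mem:
  assumes "\<not> coeffs_in m p"
  obtains i where "coeff p i \<notin> m" "\<forall>i'>i. coeff p i' \<in> m"
proof -
  let ?P = "\<lambda>i. coeff p i \<notin> m"
  obtain k where "?P k"
    using assms unfolding coeffs_in_def by blast
  have bound: "i \<le> degree p" if "?P i" for i
    using that zero_mem by (metis coeff_eq_0 not_le)
  show thesis
  proof (rule that)
    show "?P (Greatest ?P)"
      using GreatestI_nat[of ?P k "degree p", OF \<open>?P k\<close> bound] .
    show "\<forall>i'>Greatest ?P. coeff p i' \<in> m"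
      using Greatest_le_nat[of ?P _ "degree p", OF _ bound] by (meson not_le)
  qed
qed

lemma dvd_one_iff_coeffs:
  "p dvd 1 \<longleftrightarrow> coeff p 0 \<notin> m \<and> (\<forall>i>0. coeff p i \<in> m)"
proof
  assume "p dvd 1"
  then obtain q where pq: "p * q = 1"
    by (metis dvdE)
  then have "\<not> coeffs_in m (p * q)"
    using one_not_mem unfolding coeffs_in_def by (metis one_poly_eq_simps(1) coeff_pCons_0)
  then have "\<not> coeffs_in m p" "\<not> coeffs_in m q"
    using coeffs_in_mult_left coeffs_in_mult_right by blast+
  then obtain i j where
    i: "coeff p i \<notin> m" "\<forall>i'>i. coeff p i' \<in> m" and j: "coeff q j \<notin> m" "\<forall>j'>j. coeff q j' \<in> m"
    by (metis obtain_highest_coeff_not_mem)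
  have "i = 0"
    using coeff_mult_highest_not_mem[OF i j] pq zero_mem by (cases "i = 0") auto
  moreover have "coeff p 0 * coeff q 0 = 1"
    using pq coeff_mult_0[of p q] by simp
  then have "coeff p 0 \<notin> m"
    using one_not_mem mult_mem_right by metis
  ultimately show "coeff p 0 \<notin> m \<and> (\<forall>i>0. coeff p i \<in> m)"
    using i by simp
next
  assume p: "coeff p 0 \<notin> m \<and> (\<forall>i>0. coeff p i \<in> m)"
  define c where "c = coeff p 0"
  obtain c' where "c * c' = 1"
    using p unit_if_not_mem unfolding c_def by blast
  define n where "n = p - [:c:]"
  have "coeffs_in m n"
    unfolding coeffs_in_def
  proof
    fix i
    show "coeff n i \<in> m"
      using p zero_mem by (cases i) (simp_all add: n_def c_def)
  qed
  then have "n * n = 0"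
    using coeffs_in_mult_eq_0 by blast
  have "p = [:c:] + n"
    by (simp add: n_def)
  then have "p * ([:c':] - smult (c' * c') n) =
      [:c * c':] - smult (c' * (c * c')) n + smult c' n - smult (c' * c') (n * n)"
    by (simp add: algebra_simps smult_add_right smult_smult)
  also have "\<dots> = 1"
    using \<open>c * c' = 1\<close> \<open>n * n = 0\<close> by (simp add: one_pCons)
  finally show "p dvd 1"
    by (metis dvdI)
qed

lemma GE_poly_coeff_not_mem: "GE_poly m h \<Longrightarrow> coeff h n \<notin> m \<Longrightarrow> n = degree h"
  unfolding GE_poly_def using zero_mem by (metis coeff_eq_0 linorder_neqE_nat)

lemma GE_poly_not_coeffs_in: "GE_poly m h \<Longrightarrow> \<not> coeffs_in m h"
  unfolding GE_poly_def coeffs_in_def using one_not_mem by metis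

lemma factor_of_GE_poly_single_coeff_not_mem:
  assumes "GE_poly m (p * q)"
  obtains i where "coeff p i \<notin> m" "\<forall>j. j \<noteq> i \<longrightarrow> coeff p j \<in> m"
proof -
  have "\<not> coeffs_in m p" "\<not> coeffs_in m q"
    using GE_poly_not_coeffs_in[OF assms] coeffs_in_mult_left coeffs_in_mult_right by blast+
  then obtain lp lq hp hq where
    lp: "coeff p lp \<notin> m" "\<forall>i<lp. coeff p i \<in> m" and lq: "coeff q lq \<notin> m" "\<forall>i<lq. coeff q i \<in> m" and
    hp: "coeff p hp \<notin> m" "\<forall>i>hp. coeff p i \<in> m" and hq: "coeff q hq \<notin> m" "\<forall>i>hq. coeff q i \<in> m"
    by (metis obtain_lowest_coeff_not_mem obtain_highest_coeff_not_mem)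
  have "lp + lq = hp + hq"
    using GE_poly_coeff_not_mem[OF assms] coeff_mult_lowest_not_mem[OF lp lq]
      coeff_mult_highest_not_mem[OF hp hq] by metis
  moreover have "lp \<le> hp" "lq \<le> hq"
    using lp hp lq hq by (meson not_le)+
  ultimately have "lp = hp"
    by linarith
  show thesis
  proof (rule that[OF lp(1)], intro allI impI)
    fix j
    assume "j \<noteq> lp"
    then have "j < lp \<or> j > hp"
      using \<open>lp = hp\<close> by linarith
    then show "coeff p j \<in> m"
      using lp hp by blast
  qed
qed

lemma irreducible_GE_poly:
  assumes h: "GE_poly m h" and h0: "coeff h 0 \<noteq> 0"
  shows "irreducible h"
proof (rule irreducibleI)
  show "h \<noteq> 0"
    using GE_poly_not_coeffs_in[OF h] zero_mem by (auto simp: coeffs_in_def)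
  show "\<not> h dvd 1"
    using h one_not_mem by (auto simp: GE_poly_def dvd_one_iff_coeffs)
  have unit: "a dvd 1" if ab: "GE_poly m (a * b)" and a0: "coeff a 0 \<notin> m" for a b
  proof -
    obtain i where "coeff a i \<notin> m" "\<forall>j. j \<noteq> i \<longrightarrow> coeff a j \<in> m"
      using factor_of_GE_poly_single_coeff_not_mem[OF ab] by blast
    moreover from this(2) have "i = 0"
      using a0 by metis
    ultimately show ?thesis
      by (simp add: dvd_one_iff_coeffs)
  qed
  fix a b
  assume "h = a * b"
  moreover have "coeff a 0 \<notin> m \<or> coeff b 0 \<notin> m"
    using h0 \<open>h = a * b\<close> square_zero by (auto simp: coeff_mult_0)
  ultimately show "a dvd 1 \<or> b dvd 1"
    using h unit[of a b] unit[of b a] by (auto simp: mult.commute)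
qed

lemma coeff_0_neq_0_if_irreducible:
  assumes "irreducible f" "lead_coeff f \<notin> m" "degree f \<ge> 2"
  shows "coeff f 0 \<noteq> 0"
proof
  assume "coeff f 0 = 0"
  then obtain q where q: "f = pCons 0 q"
    by (metis pCons_cases coeff_pCons_0)
  then have "f = [:0, 1:] * q"
    by simp
  moreover have "\<not> [:0, 1:] dvd (1 :: 'a poly)"
    unfolding dvd_one_iff_coeffs using one_not_mem
    by (metis One_nat_def coeff_pCons_0 coeff_pCons_Suc zero_less_one)
  moreover have "\<not> q dvd 1"
  proof
    assume "q dvd 1"
    then have "coeff q (degree f - 1) \<in> m"
      using assms(3) by (simp add: dvd_one_iff_coeffs)
    moreover have "degree f = Suc (degree f - 1)"
      using assms(3) by simp
    then have "coeff q (degree f - 1) = lead_coeff f"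
      using q by (metis coeff_pCons_Suc)
    ultimately show False
      using assms(2) by simp
  qed
  ultimately show False
    using irreducibleD[OF assms(1)] by blast
qed

lemma GE_poly_decompose:
  assumes "GE_poly m f"
  shows "coeffs_in m (f - monom 1 (degree f))" "degree (f - monom 1 (degree f)) < degree f"
proof -
  have coeff_eq: "coeff (f - monom 1 (degree f)) i = (if i < degree f then coeff f i else 0)" for i
    using assms coeff_eq_0[of f i] by (auto simp: GE_poly_def coeff_monom)
  show "coeffs_in m (f - monom 1 (degree f))"
    unfolding coeffs_in_def coeff_eq using assms zero_mem by (simp add: GE_poly_def)
  show "degree (f - monom 1 (degree f)) < degree f"
    using assms unfolding GE_poly_def by (intro degree_lessI) (simp_all only: coeff_eq, auto)
qed

lemma GE_poly_GE_cofactor: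
  assumes "finite A" "\<forall>i\<in>A. GE_poly m (f i)" "\<forall>i\<in>A. degree (f i) \<le> d" "d > 0"
  shows "GE_poly m (GE_cofactor f A d)" "degree (GE_cofactor f A d) = d"
proof -
  define G where "G = (\<Sum>i\<in>A. monom 1 (d - degree (f i)) * (f i - monom 1 (degree (f i))))"
  have "coeffs_in m G"
    using assms(2) unfolding G_def by (intro coeffs_in_sum coeffs_in_mult_right GE_poly_decompose) auto
  have "degree G < d"
    unfolding G_def
  proof (rule degree_sum_less[OF _ assms(4)])
    fix i
    assume "i \<in> A"
    then have "degree (f i - monom 1 (degree (f i))) < degree (f i)" "degree (f i) \<le> d"
      using assms(2,3) GE_poly_decompose by auto
    then show "degree (monom 1 (d - degree (f i)) * (f i - monom 1 (degree (f i)))) < d"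
      using degree_mult_le[of "monom 1 (d - degree (f i))" "f i - monom 1 (degree (f i))"]
        degree_monom_le[of "1::'a" "d - degree (f i)"]
      by linarith
  qed
  then have coeff_G: "coeff G i = 0" if "i \<ge> d" for i
    using that by (intro coeff_eq_0) linarith
  have cofactor: "GE_cofactor f A d = monom 1 d + G"
    by (simp add: GE_cofactor_def G_def)
  show degree: "degree (GE_cofactor f A d) = d"
    unfolding cofactor using \<open>degree G < d\<close> zero_neq_one[symmetric]
    by (subst degree_add_eq_left) (simp_all add: degree_monom_eq)
  show "GE_poly m (GE_cofactor f A d)"
    unfolding GE_poly_def degree using \<open>coeffs_in m G\<close> assms(4) coeff_G
    by (auto simp: cofactor coeffs_in_def coeff_monom)
qed

lemma prod_GE_poly_eq_GE_cofactor_mult: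
  assumes "finite A" "j \<in> A" "\<forall>i\<in>A. GE_poly m (f i)" "\<forall>i\<in>A. degree (f i) \<le> degree (f j)"
  shows "(\<Prod>i\<in>A. f i) = GE_cofactor f A (degree (f j)) * monom 1 (\<Sum>i\<in>A - {j}. degree (f i))"
proof -
  define d where "d i = degree (f i)" for i
  define g where "g i = f i - monom 1 (d i)" for i
  define e where "e = (\<Sum>i\<in>A - {j}. d i)"
  have D: "(\<Sum>i\<in>A. d i) = d j + e"
    unfolding e_def using assms(1,2) by (rule sum.remove)
  have "(\<Prod>i\<in>A. f i) = (\<Prod>i\<in>A. monom 1 (d i) + g i)"
    by (simp add: g_def)
  also have "\<dots> = monom 1 (d j + e) + (\<Sum>i\<in>A. monom 1 (d j + e - d i) * g i)"
    unfolding D[symmetric] using assms(1,3)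
    by (intro prod_monom_add_coeffs_in) (auto simp: g_def d_def GE_poly_decompose)
  also have "\<dots> = (monom 1 (d j) + (\<Sum>i\<in>A. monom 1 (d j - d i) * g i)) * monom 1 e"
  proof -
    have shift: "monom 1 (d j - d i) * g i * monom 1 e = monom 1 (d j + e - d i) * g i" if "i \<in> A" for i
    proof -
      have "d j + e - d i = (d j - d i) + e"
        using assms(4) that by (simp add: d_def)
      moreover have "monom 1 (d j - d i) * g i * monom 1 e = (monom 1 (d j - d i) * monom 1 e) * g i"
        by (simp only: ac_simps)
      ultimately show ?thesis
        by (simp add: mult_monom)
    qed
    have "(monom 1 (d j) + (\<Sum>i\<in>A. monom 1 (d j - d i) * g i)) * monom 1 e =
        monom 1 (d j + e) + (\<Sum>i\<in>A. monom 1 (d j - d i) * g i * monom 1 e)"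
      by (simp only: distrib_right sum_distrib_right mult_monom mult_1)
    also have "\<dots> = monom 1 (d j + e) + (\<Sum>i\<in>A. monom 1 (d j + e - d i) * g i)"
      using shift by simp
    finally show ?thesis ..
  qed
  finally show ?thesis
    by (simp only: GE_cofactor_def d_def g_def e_def)
qed


lemma coeff_0_GE_cofactor_neq_0:
  assumes "finite A" "j \<in> A" "GE_poly m (f j)" "irreducible (f j)" "degree (f j) \<ge> 2"
    and "\<forall>i\<in>A - {j}. degree (f i) < degree (f j)"
  shows "coeff (GE_cofactor f A (degree (f j))) 0 \<noteq> 0"
  using assms coeff_0_GE_cofactor[of A j f] coeff_0_neq_0_if_irreducible[of "f j"] one_not_mem
  by (simp add: GE_poly_def)

end

theorem proposition3p7:
  fixes m :: "'a::comm_ring_1 set" and k :: nat and f :: "nat \<Rightarrow> 'a poly"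
  assumes artinian: "artinian_ring TYPE('a)"
    and max: "maximal_ideal m"
    and local: "\<forall>J. maximal_ideal J \<longrightarrow> J = m"
    and m_nonzero: "m \<noteq> {0}"
    and m_sq: "\<forall>a\<in>m. \<forall>b\<in>m. a * b = 0"
    and k: "k \<ge> 2"
    and GE: "\<forall>i\<in>{1..k}. GE_poly m (f i)"
    and deg_mono: "\<forall>i j. 1 \<le> i \<and> i \<le> j \<and> j \<le> k \<longrightarrow> degree (f j) \<le> degree (f i)"
  shows "\<exists>h. GE_poly m h \<and> degree h = degree (f 1) \<and>
           (\<Prod>i=1..k. f i) = h * [:0, 1:] ^ (\<Sum>i=2..k. degree (f i)) \<and>
           (irreducible (f 1) \<and> degree (f 1) > degree (f 2) \<longrightarrow>
              irreducible h \<and> poly_ord (\<Prod>i=1..k. f i) = (\<Sum>i=2..k. degree (f i)))"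
proof -
  \<comment> \<open>Maximality and \<open>m\<^sup>2 = 0\<close> already make every element outside \<open>m\<close> a unit.\<close>
  interpret square_zero_local_ring m
    using max m_sq by unfold_locales auto
  define h where "h = GE_cofactor f {1..k} (degree (f 1))"
  have one: "1 \<in> {1..k}" and rest: "{1..k} - {1} = {2..k}"
    using k by auto
  have le: "\<forall>i\<in>{1..k}. degree (f i) \<le> degree (f 1)"
    using deg_mono by auto
  have "degree (f 1) > 0"
    using GE[rule_format, OF one] by (simp add: GE_poly_def)
  then have GE_h: "GE_poly m h" and "degree h = degree (f 1)"
    using GE_poly_GE_cofactor[OF _ GE le] unfolding h_def by auto
  moreover have prod: "(\<Prod>i=1..k. f i) = h * [:0, 1:] ^ (\<Sum>i=2..k. degree (f i))"
    using prod_GE_poly_eq_GE_cofactor_mult[OF _ one GE le] unfolding rest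
    by (simp add: h_def monom_altdef)
  moreover have "irreducible h \<and> poly_ord (\<Prod>i=1..k. f i) = (\<Sum>i=2..k. degree (f i))"
    if irr: "irreducible (f 1)" and gt: "degree (f 1) > degree (f 2)"
  proof -
    have "degree (f i) \<le> degree (f 2)" if "i \<in> {2..k}" for i
      using deg_mono that by auto
    then have "\<forall>i\<in>{1..k} - {1}. degree (f i) < degree (f 1)"
      using gt unfolding rest by (meson le_less_trans)
    moreover have "degree (f 2) \<ge> 1"
      using GE k by (auto simp: GE_poly_def)
    then have "degree (f 1) \<ge> 2"
      using gt by linarith
    ultimately have "coeff h 0 \<noteq> 0"
      using coeff_0_GE_cofactor_neq_0[of "{1..k}" 1 f] GE one irr unfolding h_def by auto
    then show ?thesis
      using irreducible_GE_poly[OF GE_h] poly_ord_mult_monom[of h] prod by (simp add: monom_altdef)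
  qed
  ultimately show ?thesis
    by blast
qed

end
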